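(* Let $n,K\ge1$, $\varepsilon>0$, $\Delta^{\inf}\in\mathbb{R}$, $c\ge0$ (playing the role of $f(x^0)-f^{\inf}$), ${\bf L}\in\mathbb{S}^d_{++}$, ${\bf L}_1,\dots,{\bf L}_n\in\mathbb{S}^d_{++}$, and let ${\bf S}_1,\dots,{\bf S}_n$ be random matrices in $\mathbb{S}^d_+$ with $\mathbb{E}[{\bf S}_i]={\bf I}_d$ and finite second moments. For ${\bf D}\in\mathbb{S}^d_{++}$ let $\lambda_{{\bf D}}:=\max_i\lambda_{\max}\big(\mathbb{E}[{\bf L}_i^{1/2}({\bf S}_i-{\bf I}_d){\bf D}{\bf L}{\bf D}({\bf S}_i-{\bf I}_d){\bf L}_i^{1/2}]\big)$. Then the set of ${\bf D}\in\mathbb{S}^d_{++}$ satisfying $${\bf D}{\bf L}{\bf D}\preceq{\bf D},\qquad\lambda_{{\bf D}}\le\frac nK,\qquad 4\Delta^{\inf}\lambda_{{\bf D}}\le n\varepsilon^2\det({\bf D})^{1/d},\qquad K\ge\frac{12c}{\det({\bf D})^{1/d}\varepsilon^2}$$ is convex.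
   Context: $\mathbb{S}^d_{+}$/$\mathbb{S}^d_{++}$: symmetric positive semidefinite/definite $d\times d$ matrices; $\preceq$ is the Loewner order; $\lambda_{\max}$ is the largest eigenvalue. *)

theory Defs
  imports "HOL-Probability.Probability"
begin

definition sym_mat :: "real^'n^'n \<Rightarrow> bool" where
  "sym_mat A \<longleftrightarrow> transpose A = A"

definition psd_mat :: "real^'n^'n \<Rightarrow> bool" where
  "psd_mat A \<longleftrightarrow> sym_mat A \<and> (\<forall>x. 0 \<le> x \<bullet> (A *v x))"

definition pd_mat :: "real^'n^'n \<Rightarrow> bool" where
  "pd_mat A \<longleftrightarrow> sym_mat A \<and> (\<forall>x. x \<noteq> 0 \<longrightarrow> 0 < x \<bullet> (A *v x))"

definition loewner_le :: "real^'n^'n \<Rightarrow> real^'n^'n \<Rightarrow> bool" where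
  "loewner_le A B \<longleftrightarrow> psd_mat (B - A)"

definition mat_sqrt :: "real^'n^'n \<Rightarrow> real^'n^'n" where
  "mat_sqrt A = (THE B. psd_mat B \<and> B ** B = A)"

definition lambda_max :: "real^'n^'n \<Rightarrow> real" where
  "lambda_max A = Max {l. \<exists>v. v \<noteq> 0 \<and> A *v v = l *s v}"

definition mat_expect :: "'w measure \<Rightarrow> ('w \<Rightarrow> real^'n^'m) \<Rightarrow> real^'n^'m" where
  "mat_expect M X = (\<chi> i j. integral\<^sup>L M (\<lambda>w. X w $ i $ j))"

definition lambda_D ::
  "'w measure \<Rightarrow> real^'n^'n \<Rightarrow> (nat \<Rightarrow> real^'n^'n) \<Rightarrow> (nat \<Rightarrow> 'w \<Rightarrow> real^'n^'n)
    \<Rightarrow> nat \<Rightarrow> real^'n^'n \<Rightarrow> real" where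
  "lambda_D M L Ls S n D = Max ((\<lambda>i. lambda_max (mat_expect M (\<lambda>w.
      mat_sqrt (Ls i) ** (S i w - mat 1) ** D ** L ** D ** (S i w - mat 1) ** mat_sqrt (Ls i))))
      ` {1..n})"

end

(*
  Each defining condition cuts out a convex set. The map D \<mapsto> D L D is convex in the
  Loewner order: its defect on a convex combination u D1 + v D2 is u v (D1 - D2) L (D1 - D2),
  which is positive semidefinite. Composing with the positive linear maps
  X \<mapsto> E[L_i^(1/2) (S_i - I) X (S_i - I) L_i^(1/2)], then with lambda_max (monotone and
  convex on symmetric matrices) and taking the maximum over i shows that lambda_D is convex.
  By Minkowski's determinant inequality det^(1/d) is concave on positive definite matrices,
  so the last two conditions describe a sublevel set of a convex minus a concave function and
  a superlevel set of a concave function. The spectral theorem for real symmetric matrices,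
  which underlies lambda_max, the matrix square root and Minkowski's inequality, is obtained
  by maximising the quadratic form on the unit sphere of invariant subspaces.
*)

theory Submission
  imports Defs
begin

lemma matrix_add_rdistrib: "(A + B) ** C = A ** C + B ** (C::real^'p^'n)"
  for A B :: "real^'n^'m"
  by (simp add: matrix_matrix_mult_def vec_eq_iff sum.distrib[symmetric] distrib_right)

lemma matrix_diff_ldistrib: "C ** (A - B) = C ** A - C ** (B::real^'p^'n)"
  for C :: "real^'n^'m"
  by (simp add: matrix_matrix_mult_def vec_eq_iff sum_subtractf[symmetric] right_diff_distrib)

lemma matrix_diff_rdistrib: "(A - B) ** C = A ** C - B ** (C::real^'p^'n)"
  for A B :: "real^'n^'m"
  by (simp add: matrix_matrix_mult_def vec_eq_iff sum_subtractf[symmetric] left_diff_distrib)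

lemma column_matrix_mult: "column j (A ** B) = A *v column j (B::real^'n^'m)"
  by (simp add: column_def matrix_matrix_mult_def matrix_vector_mult_def vec_eq_iff)

lemma matrix_eq_columns: "(\<And>j. column j A = column j B) \<Longrightarrow> A = (B::real^'n^'m)"
  by (simp add: column_def vec_eq_iff)

lemma inner_transpose_matrix_vector: "(transpose A *v x) \<bullet> y = x \<bullet> (A *v (y::real^'n))"
  for A :: "real^'n^'m"
  by (simp add: dot_lmul_matrix)

lemma orthogonal_matrix_transpose_inner:
  fixes U :: "real^'n^'n"
  assumes "orthogonal_matrix U"
  shows "(transpose U *v x) \<bullet> (transpose U *v y) = x \<bullet> y"
  using assms unfolding orthogonal_matrix_def
  by (simp only: inner_transpose_matrix_vector matrix_vector_mul_assoc matrix_vector_mul_lid)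

lemma orthogonal_matrix_transpose_mult_vector:
  "orthogonal_matrix U \<Longrightarrow> transpose U *v (U *v x) = (x::real^'n)"
  by (simp only: orthogonal_matrix_def matrix_vector_mul_assoc matrix_vector_mul_lid)

lemma orthogonal_matrix_mult_transpose_vector:
  "orthogonal_matrix U \<Longrightarrow> U *v (transpose U *v x) = (x::real^'n)"
  by (simp only: orthogonal_matrix_def matrix_vector_mul_assoc matrix_vector_mul_lid)

definition diag_mat :: "('n::finite \<Rightarrow> real) \<Rightarrow> real^'n^'n" where
  "diag_mat l = (\<chi> i j. if i = j then l i else 0)"

lemma transpose_diag_mat [simp]: "transpose (diag_mat l) = diag_mat l"
  by (simp add: transpose_def diag_mat_def vec_eq_iff)

lemma diag_mat_add: "diag_mat (\<lambda>j. a j + b j) = diag_mat a + diag_mat b"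
  by (simp add: diag_mat_def vec_eq_iff)

lemma diag_mat_1 [simp]: "diag_mat (\<lambda>j. 1) = mat 1"
  by (simp add: diag_mat_def mat_def vec_eq_iff)

lemma det_diag_mat: "det (diag_mat l) = (\<Prod>j\<in>UNIV. l j)"
  by (subst det_diagonal) (auto simp: diag_mat_def)

lemma diag_mat_mult_vector: "diag_mat l *v c = (\<chi> i. l i * c $ i)"
  by (simp add: matrix_vector_mult_def diag_mat_def vec_eq_iff if_distrib if_distribR cong: if_cong)

lemma column_mult_diag_mat: "column j (U ** diag_mat l) = l j *s column j (U::real^'n^'m)"
  by (simp add: column_def matrix_matrix_mult_def diag_mat_def vec_eq_iff if_distrib if_distribR
      cong: if_cong)

lemma diag_mat_mult_diag_mat: "diag_mat a ** diag_mat b = diag_mat (\<lambda>j. a j * b j)"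
  by (rule matrix_eq_columns, simp only: column_mult_diag_mat)
    (simp add: column_def diag_mat_def vec_eq_iff)

lemma det_scaleR: "det (c *\<^sub>R (A::real^'n^'n)) = c ^ CARD('n) * det A"
proof -
  have "det (c *\<^sub>R (mat 1::real^'n^'n)) = c ^ CARD('n)"
    by (subst det_diagonal) (auto simp: mat_def)
  moreover have "c *\<^sub>R A = (c *\<^sub>R mat 1) ** A" by (simp flip: scalar_matrix_assoc)
  ultimately show ?thesis by (simp add: det_mul)
qed

lemma sym_mat_inner:
  fixes A :: "real^'n^'n"
  assumes "sym_mat A"
  shows "x \<bullet> (A *v y) = (A *v x) \<bullet> y"
  using assms unfolding sym_mat_def
  by (metis dot_lmul_matrix inner_commute transpose_matrix_vector)

lemma sym_mat_add: "sym_mat A \<Longrightarrow> sym_mat B \<Longrightarrow> sym_mat (A + B)"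
  by (simp add: sym_mat_def transpose_def vec_eq_iff)

lemma sym_mat_diff: "sym_mat A \<Longrightarrow> sym_mat B \<Longrightarrow> sym_mat (A - B)"
  by (simp add: sym_mat_def transpose_def vec_eq_iff)

lemma sym_mat_scaleR: "sym_mat A \<Longrightarrow> sym_mat (c *\<^sub>R A)"
  by (simp add: sym_mat_def transpose_scalar)

lemma convex_sym_mat: "convex {A :: real^'n^'n. sym_mat A}"
  by (rule convexI) (simp add: sym_mat_add sym_mat_scaleR)

lemma psd_mat_imp_sym_mat: "psd_mat A \<Longrightarrow> sym_mat A"
  by (simp add: psd_mat_def)

lemma pd_mat_imp_sym_mat: "pd_mat A \<Longrightarrow> sym_mat A"
  by (simp add: pd_mat_def)

lemma pd_mat_imp_psd_mat: "pd_mat A \<Longrightarrow> psd_mat A"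
  unfolding pd_mat_def psd_mat_def by (metis inner_zero_left order.order_iff_strict)

lemma psd_mat_add: "psd_mat A \<Longrightarrow> psd_mat B \<Longrightarrow> psd_mat (A + B)"
  unfolding psd_mat_def
  by (simp add: sym_mat_add matrix_vector_mult_add_rdistrib inner_add_right)

lemma psd_mat_scaleR: "psd_mat A \<Longrightarrow> 0 \<le> c \<Longrightarrow> psd_mat (c *\<^sub>R A)"
  unfolding psd_mat_def by (simp add: sym_mat_scaleR flip: scaleR_matrix_vector_assoc)

lemma pd_mat_add_psd_mat: "pd_mat A \<Longrightarrow> psd_mat B \<Longrightarrow> pd_mat (A + B)"
  unfolding pd_mat_def psd_mat_def
  by (simp add: sym_mat_add matrix_vector_mult_add_rdistrib inner_add_right add_pos_nonneg)

lemma pd_mat_scaleR: "pd_mat A \<Longrightarrow> 0 < c \<Longrightarrow> pd_mat (c *\<^sub>R A)"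
  unfolding pd_mat_def by (simp add: sym_mat_scaleR flip: scaleR_matrix_vector_assoc)

lemma convex_pd_mat: "convex {A :: real^'n^'n. pd_mat A}"
proof (rule convexI, clarsimp)
  fix A B :: "real^'n^'n" and u v :: real
  assume "pd_mat A" "pd_mat B" "0 \<le> u" "0 \<le> v" "u + v = 1"
  then show "pd_mat (u *\<^sub>R A + v *\<^sub>R B)"
    by (cases "u = 0")
      (auto intro!: pd_mat_add_psd_mat pd_mat_scaleR intro: psd_mat_scaleR pd_mat_imp_psd_mat)
qed

lemma psd_mat_congruence:
  assumes "psd_mat B"
  shows "psd_mat (transpose R ** B ** R)"
  unfolding psd_mat_def
proof
  show "sym_mat (transpose R ** B ** R)"
    using assms by (simp add: psd_mat_def sym_mat_def matrix_transpose_mul matrix_mul_assoc)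
  show "\<forall>x. 0 \<le> x \<bullet> ((transpose R ** B ** R) *v x)"
  proof
    fix x
    have "x \<bullet> ((transpose R ** B ** R) *v x) = (R *v x) \<bullet> (B *v (R *v x))"
      by (metis inner_transpose_matrix_vector transpose_transpose matrix_vector_mul_assoc
          inner_commute)
    then show "0 \<le> x \<bullet> ((transpose R ** B ** R) *v x)"
      using assms unfolding psd_mat_def by simp
  qed
qed

lemma psd_mat_congruence_sym:
  "psd_mat B \<Longrightarrow> sym_mat R \<Longrightarrow> psd_mat (R ** B ** R)"
  using psd_mat_congruence[of B R] by (simp add: sym_mat_def)

lemma loewner_le_trans: "loewner_le A B \<Longrightarrow> loewner_le B C \<Longrightarrow> loewner_le A C"
  unfolding loewner_le_def using psd_mat_add[of "C - B" "B - A"] by simp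

lemma loewner_le_convex_combination:
  assumes "loewner_le A B" "loewner_le A' B'" "0 \<le> u" "0 \<le> v"
  shows "loewner_le (u *\<^sub>R A + v *\<^sub>R A') (u *\<^sub>R B + v *\<^sub>R B')"
proof -
  have "u *\<^sub>R B + v *\<^sub>R B' - (u *\<^sub>R A + v *\<^sub>R A') = u *\<^sub>R (B - A) + v *\<^sub>R (B' - A')"
    by (simp add: algebra_simps)
  then show ?thesis
    using assms unfolding loewner_le_def by (simp add: psd_mat_add psd_mat_scaleR)
qed

section \<open>The spectral theorem\<close>

lemma linear_coeff_zero_if_quadratic_nonpos:
  fixes a b :: real
  assumes "\<And>t. a * t + b * t\<^sup>2 \<le> 0"
  shows "a = 0"
proof (rule ccontr)
  assume "a \<noteq> 0"
  define s where "s = 1 / (\<bar>b\<bar> + 1)"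
  have "s > 0" "1 + b * s > 0"
    unfolding s_def by (auto simp: field_simps abs_if split: if_splits)
  then have "0 < a\<^sup>2 * s * (1 + b * s)"
    using \<open>a \<noteq> 0\<close> by simp
  also have "\<dots> = a * (s * a) + b * (s * a)\<^sup>2"
    by (simp add: power2_eq_square algebra_simps)
  finally show False using assms[of "s * a"] by linarith
qed

lemma quadratic_form_max_on_invariant_subspace_is_eigenvector:
  fixes A :: "real^'n^'n"
  assumes sym: "sym_mat A" and W: "subspace W" and inv: "\<And>y. y \<in> W \<Longrightarrow> A *v y \<in> W"
    and x: "x \<in> W" "x \<bullet> x = 1"
    and max: "\<And>y. y \<in> W \<Longrightarrow> y \<bullet> (A *v y) \<le> (x \<bullet> (A *v x)) * (y \<bullet> y)"
  shows "A *v x = (x \<bullet> (A *v x)) *s x"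
proof -
  define \<mu> where "\<mu> = x \<bullet> (A *v x)"
  define r where "r = A *v x - \<mu> *s x"
  have r: "r \<in> W"
    unfolding r_def scalar_mult_eq_scaleR using W x inv by (simp add: subspace_diff subspace_scale)
  \<comment> \<open>the bound at \<open>x + t r\<close> is a quadratic inequality in \<open>t\<close> with linear coefficient \<open>2 r \<bullet> r\<close>\<close>
  have "2 * (r \<bullet> r) * t + (r \<bullet> (A *v r) - \<mu> * (r \<bullet> r)) * t\<^sup>2 \<le> 0" for t
  proof -
    have "x + t *\<^sub>R r \<in> W" using W x r by (simp add: subspace_add subspace_scale)
    from max[OF this]
    have "(x + t *\<^sub>R r) \<bullet> (A *v (x + t *\<^sub>R r)) \<le> \<mu> * ((x + t *\<^sub>R r) \<bullet> (x + t *\<^sub>R r))"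
      unfolding \<mu>_def .
    moreover have "x \<bullet> (A *v r) = r \<bullet> (A *v x)"
      using sym_mat_inner[OF sym] inner_commute by metis
    moreover have "r \<bullet> (A *v x) = r \<bullet> r + \<mu> * (r \<bullet> x)"
      unfolding r_def by (simp add: scalar_mult_eq_scaleR inner_diff_right inner_diff_left)
    ultimately show ?thesis
      using x(2) unfolding \<mu>_def
      by (simp add: matrix_vector_right_distrib matrix_vector_mult_scaleR inner_add_left
          inner_add_right inner_commute power2_eq_square algebra_simps)
  qed
  then have "2 * (r \<bullet> r) = 0" by (rule linear_coeff_zero_if_quadratic_nonpos)
  then show ?thesis unfolding r_def \<mu>_def by simp
qed

lemma quadratic_form_attains_max_on_subspace:
  fixes A :: "real^'n^'n"
  assumes W: "subspace W" and z: "z \<in> W" "z \<noteq> 0"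
  shows "\<exists>x\<in>W. x \<bullet> x = 1 \<and> (\<forall>y\<in>W. y \<bullet> (A *v y) \<le> (x \<bullet> (A *v x)) * (y \<bullet> y))"
proof -
  define T where "T = W \<inter> sphere 0 1"
  have unit: "y /\<^sub>R norm y \<in> T" if "y \<in> W" "y \<noteq> 0" for y
    unfolding T_def using that W by (simp add: subspace_scale norm_divide)
  have "compact T"
    unfolding T_def using W closed_subspace by (intro closed_Int_compact) auto
  moreover have "T \<noteq> {}" using unit[OF z] by blast
  moreover have "continuous_on T (\<lambda>x. x \<bullet> (A *v x))"
    by (intro continuous_intros linear_continuous_on matrix_vector_mul_linear bounded_linear_intros)
  ultimately obtain x where x: "x \<in> T" and max: "\<And>y. y \<in> T \<Longrightarrow> y \<bullet> (A *v y) \<le> x \<bullet> (A *v x)"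
    using continuous_attains_sup by metis
  have "y \<bullet> (A *v y) \<le> (x \<bullet> (A *v x)) * (y \<bullet> y)" if "y \<in> W" for y
  proof (cases "y = 0")
    case False
    have "(y \<bullet> (A *v y)) / (y \<bullet> y) = (y /\<^sub>R norm y) \<bullet> (A *v (y /\<^sub>R norm y))"
      by (simp add: matrix_vector_mult_scaleR power2_norm_eq_inner[symmetric] power2_eq_square
          divide_inverse)
    also have "\<dots> \<le> x \<bullet> (A *v x)" using max unit that False by blast
    finally show ?thesis using False by (simp add: divide_le_eq)
  qed simp
  moreover have "x \<in> W" "x \<bullet> x = 1" using x unfolding T_def by (auto simp: norm_eq_1)
  ultimately show ?thesis by blast
qed

lemma symmetric_eigenvector_orthogonal_to:
  fixes A :: "real^'n^'n"
  assumes sym: "sym_mat A" and B: "finite B" "pairwise orthogonal B" "card B < CARD('n)"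
    and eig: "\<And>b. b \<in> B \<Longrightarrow> norm b = 1 \<and> (\<exists>l. A *v b = l *s b)"
  shows "\<exists>x. norm x = 1 \<and> (\<forall>b\<in>B. orthogonal b x) \<and> (\<exists>l. A *v x = l *s x)"
proof -
  define W where "W = {y. \<forall>b\<in>B. orthogonal b y}"
  have W: "subspace W" unfolding W_def by (rule subspace_orthogonal_to_vectors)
  have "independent B"
    using B(2) eig pairwise_orthogonal_independent by fastforce
  then have "dim B < DIM(real^'n)" using dim_eq_card_independent B(3) by force
  then obtain z where z: "z \<noteq> 0" "\<And>y. y \<in> span B \<Longrightarrow> orthogonal z y"
    using orthogonal_to_subspace_exists by blast
  have "z \<in> W" unfolding W_def using z(2) span_base orthogonal_commute by blast
  have inv: "A *v y \<in> W" if "y \<in> W" for y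
  proof -
    have "orthogonal b (A *v y)" if "b \<in> B" for b
    proof -
      obtain l where l: "A *v b = l *s b" using eig \<open>b \<in> B\<close> by blast
      have "b \<bullet> (A *v y) = l * (b \<bullet> y)"
        by (simp add: sym_mat_inner[OF sym] l scalar_mult_eq_scaleR)
      then show ?thesis using \<open>y \<in> W\<close> \<open>b \<in> B\<close> unfolding W_def orthogonal_def by simp
    qed
    then show ?thesis unfolding W_def by blast
  qed
  obtain x where x: "x \<in> W" "x \<bullet> x = 1"
    and max: "\<forall>y\<in>W. y \<bullet> (A *v y) \<le> (x \<bullet> (A *v x)) * (y \<bullet> y)"
    using quadratic_form_attains_max_on_subspace[OF W \<open>z \<in> W\<close> z(1)] by blast
  have "A *v x = (x \<bullet> (A *v x)) *s x"
    using quadratic_form_max_on_invariant_subspace_is_eigenvector[OF sym W inv x] max by blast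
  then show ?thesis using x unfolding W_def by (auto simp: norm_eq_1)
qed

lemma symmetric_orthonormal_eigenvectors:
  fixes A :: "real^'n^'n"
  assumes sym: "sym_mat A" and "k \<le> CARD('n)"
  shows "\<exists>B. finite B \<and> card B = k \<and> pairwise orthogonal B \<and>
           (\<forall>b\<in>B. norm b = 1 \<and> (\<exists>l. A *v b = l *s b))"
  using \<open>k \<le> CARD('n)\<close>
proof (induction k)
  case 0
  show ?case by (intro exI[of _ "{}"]) auto
next
  case (Suc k)
  then obtain B where B: "finite B" "card B = k" "pairwise orthogonal B"
    "\<forall>b\<in>B. norm b = 1 \<and> (\<exists>l. A *v b = l *s b)" by auto
  then obtain x where x: "norm x = 1" "\<forall>b\<in>B. orthogonal b x" "\<exists>l. A *v x = l *s x"
    using symmetric_eigenvector_orthogonal_to[OF sym B(1,3)] Suc.prems by auto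
  have "x \<notin> B" using x(1,2) by (auto simp: orthogonal_def)
  then show ?case
    using B x by (intro exI[of _ "insert x B"]) (auto simp: pairwise_insert orthogonal_commute)
qed

theorem symmetric_spectral_decomposition:
  fixes A :: "real^'n^'n"
  assumes sym: "sym_mat A"
  shows "\<exists>U l. orthogonal_matrix U \<and> A = U ** diag_mat l ** transpose U"
proof -
  obtain B where B: "finite B" "card B = CARD('n)" "pairwise orthogonal B"
     "\<forall>b\<in>B. norm b = 1 \<and> (\<exists>l. A *v b = l *s b)"
    using symmetric_orthonormal_eigenvectors[OF sym order_refl] by blast
  obtain f where f: "bij_betw f (UNIV::'n set) B"
    using finite_same_card_bij[of "UNIV::'n set" B] B(1,2) by force
  define U where "U = (\<chi> i j. f j $ i)"
  have column_U: "column j U = f j" for j by (simp add: U_def column_def vec_eq_iff)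
  have fB: "f j \<in> B" for j using bij_betw_apply[OF f] by simp
  have "f i \<noteq> f j" if "i \<noteq> j" for i j
    using f that unfolding bij_betw_def inj_on_def by blast
  then have U: "orthogonal_matrix U"
    unfolding orthogonal_matrix_orthonormal_columns column_U
    using fB B(3,4) by (simp add: pairwise_def)
  have "\<forall>j. \<exists>m. A *v f j = m *s f j" using B(4) fB by blast
  then obtain l where l: "A *v f j = l j *s f j" for j by metis
  have AU: "A ** U = U ** diag_mat l"
    by (rule matrix_eq_columns)
      (simp only: column_mult_diag_mat, simp add: column_matrix_mult column_U l)
  have "A = A ** (U ** transpose U)"
    using U by (simp add: orthogonal_matrix_def)
  also have "\<dots> = U ** diag_mat l ** transpose U"
    by (simp only: matrix_mul_assoc AU)
  finally show ?thesis using U by blast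
qed

lemma spectral_decomposition_eigenvector:
  fixes U :: "real^'n^'n"
  assumes U: "orthogonal_matrix U" and A: "A = U ** diag_mat l ** transpose U"
  shows "A *v column j U = l j *s column j U"
proof -
  have "A ** U = U ** diag_mat l ** (transpose U ** U)"
    unfolding A by (simp only: matrix_mul_assoc)
  also have "\<dots> = U ** diag_mat l"
    using U by (simp add: orthogonal_matrix_def)
  finally have "column j (A ** U) = l j *s column j U"
    by (simp only: column_mult_diag_mat)
  then show ?thesis by (simp only: column_matrix_mult)
qed

lemma spectral_decomposition_quadratic_form:
  fixes U :: "real^'n^'n"
  assumes "orthogonal_matrix U"
  shows "x \<bullet> ((U ** diag_mat l ** transpose U) *v x) = (\<Sum>j\<in>UNIV. l j * ((transpose U *v x) $ j)\<^sup>2)"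
proof -
  define c where "c = transpose U *v x"
  have "x \<bullet> ((U ** diag_mat l ** transpose U) *v x) = c \<bullet> (diag_mat l *v c)"
    unfolding c_def
    by (simp only: inner_transpose_matrix_vector matrix_vector_mul_assoc matrix_mul_assoc)
  also have "\<dots> = (\<Sum>j\<in>UNIV. l j * (c $ j)\<^sup>2)"
    by (simp add: diag_mat_mult_vector inner_vec_def mult_ac power2_eq_square)
  finally show ?thesis unfolding c_def .
qed

lemma spectral_decomposition_eigenvalue:
  fixes U :: "real^'n^'n"
  assumes U: "orthogonal_matrix U" and A: "A = U ** diag_mat l ** transpose U"
  shows "l j = column j U \<bullet> (A *v column j U)"
proof -
  have "column j U \<bullet> column j U = 1"
    using U unfolding orthogonal_matrix_orthonormal_columns by (simp add: norm_eq_1)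
  then show ?thesis by (simp add: spectral_decomposition_eigenvector[OF U A] scalar_mult_eq_scaleR)
qed

lemma spectral_decomposition_eigenvalues:
  fixes U :: "real^'n^'n"
  assumes U: "orthogonal_matrix U" and A: "A = U ** diag_mat l ** transpose U"
  shows "{m. \<exists>v. v \<noteq> 0 \<and> A *v v = m *s v} = range l"
proof (intro equalityI subsetI)
  fix m assume "m \<in> range l"
  moreover have "column j U \<noteq> 0" for j
    using U unfolding orthogonal_matrix_orthonormal_columns by (metis norm_zero zero_neq_one)
  ultimately show "m \<in> {m. \<exists>v. v \<noteq> 0 \<and> A *v v = m *s v}"
    using spectral_decomposition_eigenvector[OF U A] by blast
next
  fix m assume "m \<in> {m. \<exists>v. v \<noteq> 0 \<and> A *v v = m *s v}"
  then obtain v where v: "v \<noteq> 0" "A *v v = m *s v" by blast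
  define c where "c = transpose U *v v"
  have "c \<noteq> 0"
    using v(1) orthogonal_matrix_mult_transpose_vector[OF U, of v] unfolding c_def by force
  then obtain j where j: "c $ j \<noteq> 0" by (auto simp: vec_eq_iff)
  have "diag_mat l *v c = transpose U *v (A *v v)"
    unfolding A c_def
    by (simp only: matrix_vector_mul_assoc[symmetric] orthogonal_matrix_transpose_mult_vector[OF U])
  also have "\<dots> = m *s c"
    by (simp only: v(2) c_def scalar_mult_eq_scaleR matrix_vector_mult_scaleR)
  finally have "l j * c $ j = m * c $ j" by (simp add: diag_mat_mult_vector vec_eq_iff)
  then show "m \<in> range l" using j by (metis mult_right_cancel rangeI)
qed

lemma det_spectral_decomposition:
  fixes U :: "real^'n^'n"
  assumes "orthogonal_matrix U"
  shows "det (U ** diag_mat l ** transpose U) = (\<Prod>j\<in>UNIV. l j)"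
proof -
  have "det U * det U = 1" using det_orthogonal_matrix[OF assms] by auto
  then show ?thesis by (simp add: det_mul det_diag_mat)
qed

lemma psd_mat_spectral_eigenvalue_nonneg:
  fixes U :: "real^'n^'n"
  assumes "psd_mat A" "orthogonal_matrix U" "A = U ** diag_mat l ** transpose U"
  shows "0 \<le> l j"
  using assms spectral_decomposition_eigenvalue[of U A l j] unfolding psd_mat_def by simp

lemma pd_mat_spectral_eigenvalue_pos:
  fixes U :: "real^'n^'n"
  assumes "pd_mat A" "orthogonal_matrix U" "A = U ** diag_mat l ** transpose U"
  shows "0 < l j"
proof -
  have "column j U \<noteq> 0"
    using assms(2) unfolding orthogonal_matrix_orthonormal_columns by (metis norm_zero zero_neq_one)
  then show ?thesis
    using assms spectral_decomposition_eigenvalue[of U A l j] unfolding pd_mat_def by simp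
qed

lemma pd_mat_det_pos:
  assumes "pd_mat (A::real^'n^'n)"
  shows "0 < det A"
proof -
  obtain U l where U: "orthogonal_matrix U" and A: "A = U ** diag_mat l ** transpose U"
    using symmetric_spectral_decomposition assms unfolding pd_mat_def by blast
  show ?thesis
    unfolding A det_spectral_decomposition[OF U]
    using pd_mat_spectral_eigenvalue_pos[OF assms U A] by (simp add: prod_pos)
qed

lemma psd_sqrt_eq_spectral:
  fixes U :: "real^'n^'n"
  assumes pd: "pd_mat A" and U: "orthogonal_matrix U" and A: "A = U ** diag_mat l ** transpose U"
    and Q: "psd_mat Q" "Q ** Q = A"
  shows "Q = U ** diag_mat (\<lambda>j. sqrt (l j)) ** transpose U"
proof -
  have Q_column: "Q *v column j U = sqrt (l j) *s column j U" for j
  proof -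
    define s where "s = sqrt (l j)"
    define w where "w = Q *v column j U - s *s column j U"
    have "0 < l j" by (rule pd_mat_spectral_eigenvalue_pos[OF pd U A])
    then have "0 < s" "s * s = l j" unfolding s_def by simp_all
    have "Q *v (Q *v column j U) = l j *s column j U"
      using spectral_decomposition_eigenvector[OF U A] Q(2) by (simp add: matrix_vector_mul_assoc)
    then have "Q *v w = (- s) *s w"
      unfolding w_def using \<open>s * s = l j\<close>
      by (simp add: matrix_vector_mult_diff_distrib scalar_mult_eq_scaleR matrix_vector_mult_scaleR
          algebra_simps)
    then have "0 \<le> - s * (w \<bullet> w)"
      using Q(1) unfolding psd_mat_def by (metis inner_scaleR_right scalar_mult_eq_scaleR)
    then have "w \<bullet> w \<le> 0" using \<open>0 < s\<close> by (simp add: mult_le_0_iff)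
    then have "w = 0" by (metis inner_eq_zero_iff inner_ge_zero order_antisym)
    then show ?thesis unfolding w_def s_def by simp
  qed
  have "Q ** U = U ** diag_mat (\<lambda>j. sqrt (l j))"
    by (rule matrix_eq_columns, simp only: column_mult_diag_mat)
      (simp add: column_matrix_mult Q_column)
  then have "Q ** (U ** transpose U) = U ** diag_mat (\<lambda>j. sqrt (l j)) ** transpose U"
    by (simp only: matrix_mul_assoc)
  then show ?thesis using U by (simp add: orthogonal_matrix_def)
qed

lemma mat_sqrt_pd:
  assumes pd: "pd_mat (A::real^'n^'n)"
  shows "psd_mat (mat_sqrt A) \<and> mat_sqrt A ** mat_sqrt A = A"
proof -
  obtain U l where U: "orthogonal_matrix U" and A: "A = U ** diag_mat l ** transpose U"
    using symmetric_spectral_decomposition pd unfolding pd_mat_def by blast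
  have l: "0 < l j" for j by (rule pd_mat_spectral_eigenvalue_pos[OF pd U A])
  let ?D = "diag_mat (\<lambda>j. sqrt (l j))"
  define P where "P = U ** ?D ** transpose U"
  have "psd_mat P"
    unfolding psd_mat_def sym_mat_def P_def spectral_decomposition_quadratic_form[OF U]
    using l by (auto simp: matrix_transpose_mul matrix_mul_assoc less_imp_le intro!: sum_nonneg)
  moreover have "P ** P = A"
  proof -
    have "P ** P = U ** ?D ** (transpose U ** U) ** ?D ** transpose U"
      unfolding P_def by (simp only: matrix_mul_assoc)
    also have "\<dots> = U ** diag_mat (\<lambda>j. sqrt (l j) * sqrt (l j)) ** transpose U"
      using U by (simp add: orthogonal_matrix_def diag_mat_mult_diag_mat flip: matrix_mul_assoc)
    also have "\<dots> = A" unfolding A using l by (simp add: abs_of_pos)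
    finally show ?thesis .
  qed
  ultimately have "\<exists>!Q. psd_mat Q \<and> Q ** Q = A"
    using psd_sqrt_eq_spectral[OF pd U A] unfolding P_def by blast
  then show ?thesis unfolding mat_sqrt_def by (rule theI')
qed

lemma pd_mat_factorization:
  fixes A :: "real^'n^'n"
  assumes pd: "pd_mat A"
  obtains R R' :: "real^'n^'n" where "A = R ** transpose R" and "R' ** R = mat 1"
proof -
  obtain U l where U: "orthogonal_matrix U" and A: "A = U ** diag_mat l ** transpose U"
    using symmetric_spectral_decomposition pd unfolding pd_mat_def by blast
  have l: "0 < l j" for j by (rule pd_mat_spectral_eigenvalue_pos[OF pd U A])
  let ?D = "diag_mat (\<lambda>j. sqrt (l j))" and ?D' = "diag_mat (\<lambda>j. 1 / sqrt (l j))"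
  define R where "R = U ** ?D"
  define R' where "R' = ?D' ** transpose U"
  have "R ** transpose R = U ** (?D ** ?D) ** transpose U"
    unfolding R_def by (simp add: matrix_transpose_mul matrix_mul_assoc)
  also have "\<dots> = A" unfolding A diag_mat_mult_diag_mat using l by (simp add: abs_of_pos)
  finally have "A = R ** transpose R" ..
  moreover have "R' ** R = ?D' ** (transpose U ** U) ** ?D"
    unfolding R_def R'_def by (simp only: matrix_mul_assoc)
  then have "R' ** R = mat 1"
    using U l by (simp add: orthogonal_matrix_def diag_mat_mult_diag_mat less_imp_neq[symmetric])
  ultimately show thesis by (rule that)
qed

lemma lambda_max_spectral_decomposition:
  fixes U :: "real^'n^'n"
  assumes "orthogonal_matrix U" and "A = U ** diag_mat l ** transpose U"
  shows "lambda_max A = Max (range l)"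
  unfolding lambda_max_def spectral_decomposition_eigenvalues[OF assms] ..

lemma lambda_max_eigenvector:
  fixes A :: "real^'n^'n"
  assumes "sym_mat A"
  shows "\<exists>v. v \<noteq> 0 \<and> A *v v = lambda_max A *s v"
proof -
  obtain U l where U: "orthogonal_matrix U" and A: "A = U ** diag_mat l ** transpose U"
    using symmetric_spectral_decomposition[OF assms] by blast
  have "lambda_max A \<in> range l"
    unfolding lambda_max_spectral_decomposition[OF U A] by (intro Max_in) auto
  then show ?thesis using spectral_decomposition_eigenvalues[OF U A] by blast
qed

lemma quadratic_form_le_lambda_max:
  fixes A :: "real^'n^'n"
  assumes "sym_mat A"
  shows "x \<bullet> (A *v x) \<le> lambda_max A * (x \<bullet> x)"
proof -
  obtain U l where U: "orthogonal_matrix U" and A: "A = U ** diag_mat l ** transpose U"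
    using symmetric_spectral_decomposition[OF assms] by blast
  define c where "c = transpose U *v x"
  have "x \<bullet> (A *v x) = (\<Sum>j\<in>UNIV. l j * (c $ j)\<^sup>2)"
    unfolding A c_def by (rule spectral_decomposition_quadratic_form[OF U])
  also have "\<dots> \<le> (\<Sum>j\<in>UNIV. lambda_max A * (c $ j)\<^sup>2)"
    unfolding lambda_max_spectral_decomposition[OF U A]
    by (intro sum_mono mult_right_mono Max_ge) auto
  also have "\<dots> = lambda_max A * (c \<bullet> c)"
    by (simp add: inner_vec_def sum_distrib_left power2_eq_square)
  also have "c \<bullet> c = x \<bullet> x"
    unfolding c_def by (rule orthogonal_matrix_transpose_inner[OF U])
  finally show ?thesis .
qed

lemma lambda_max_le_iff_quadratic_form:
  fixes A :: "real^'n^'n"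
  assumes "sym_mat A"
  shows "lambda_max A \<le> r \<longleftrightarrow> (\<forall>x. x \<bullet> (A *v x) \<le> r * (x \<bullet> x))"
proof
  assume "lambda_max A \<le> r"
  then show "\<forall>x. x \<bullet> (A *v x) \<le> r * (x \<bullet> x)"
    using quadratic_form_le_lambda_max[OF assms]
    by (meson inner_ge_zero mult_right_mono order_trans)
next
  assume le: "\<forall>x. x \<bullet> (A *v x) \<le> r * (x \<bullet> x)"
  obtain v where v: "v \<noteq> 0" "A *v v = lambda_max A *s v"
    using lambda_max_eigenvector[OF assms] by blast
  have "lambda_max A * (v \<bullet> v) \<le> r * (v \<bullet> v)"
    using le v(2) by (metis inner_scaleR_right scalar_mult_eq_scaleR)
  then show "lambda_max A \<le> r" using v(1) by simp
qed

lemma lambda_max_nonneg: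
  assumes "psd_mat A"
  shows "0 \<le> lambda_max A"
proof -
  obtain v where v: "v \<noteq> 0" "A *v v = lambda_max A *s v"
    using lambda_max_eigenvector[OF psd_mat_imp_sym_mat[OF assms]] by blast
  have "0 \<le> v \<bullet> (A *v v)" using assms unfolding psd_mat_def by blast
  then have "0 \<le> lambda_max A * (v \<bullet> v)" by (simp add: v(2) scalar_mult_eq_scaleR)
  moreover have "0 < v \<bullet> v" using v(1) by simp
  ultimately show ?thesis by (simp add: zero_le_mult_iff)
qed

lemma lambda_max_mono:
  fixes A B :: "real^'n^'n"
  assumes A: "sym_mat A" and AB: "loewner_le A B"
  shows "lambda_max A \<le> lambda_max B"
proof -
  have "sym_mat B"
    using sym_mat_add[OF A psd_mat_imp_sym_mat[OF AB[unfolded loewner_le_def]]] by simp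
  have "x \<bullet> (A *v x) \<le> lambda_max B * (x \<bullet> x)" for x
  proof -
    have "0 \<le> x \<bullet> ((B - A) *v x)" using AB unfolding loewner_le_def psd_mat_def by blast
    then have "x \<bullet> (A *v x) \<le> x \<bullet> (B *v x)"
      by (simp add: matrix_vector_mult_diff_rdistrib inner_diff_right)
    also have "\<dots> \<le> lambda_max B * (x \<bullet> x)"
      by (rule quadratic_form_le_lambda_max[OF \<open>sym_mat B\<close>])
    finally show ?thesis .
  qed
  then show ?thesis using lambda_max_le_iff_quadratic_form[OF A] by blast
qed

lemma convex_on_lambda_max: "convex_on {A :: real^'n^'n. sym_mat A} lambda_max"
  unfolding convex_on_def
proof (intro conjI convex_sym_mat ballI allI impI)
  fix A B :: "real^'n^'n" and u v :: real
  assume A: "A \<in> {A. sym_mat A}" and B: "B \<in> {A. sym_mat A}" and "0 \<le> u" "0 \<le> v" "u + v = 1"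
  have "x \<bullet> ((u *\<^sub>R A + v *\<^sub>R B) *v x) \<le> (u * lambda_max A + v * lambda_max B) * (x \<bullet> x)" for x
  proof -
    have "x \<bullet> ((u *\<^sub>R A + v *\<^sub>R B) *v x) = u * (x \<bullet> (A *v x)) + v * (x \<bullet> (B *v x))"
      by (simp add: matrix_vector_mult_add_rdistrib inner_add_right
          flip: scaleR_matrix_vector_assoc)
    also have "\<dots> \<le> u * (lambda_max A * (x \<bullet> x)) + v * (lambda_max B * (x \<bullet> x))"
      using A B quadratic_form_le_lambda_max \<open>0 \<le> u\<close> \<open>0 \<le> v\<close>
      by (intro add_mono mult_left_mono) auto
    finally show ?thesis by (simp add: algebra_simps)
  qed
  moreover have "sym_mat (u *\<^sub>R A + v *\<^sub>R B)" using A B by (simp add: sym_mat_add sym_mat_scaleR)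
  ultimately show "lambda_max (u *\<^sub>R A + v *\<^sub>R B) \<le> u * lambda_max A + v * lambda_max B"
    using lambda_max_le_iff_quadratic_form by blast
qed

section \<open>Minkowski's determinant inequality\<close>

lemma geometric_mean_superadditive:
  fixes a b :: "'i \<Rightarrow> real"
  assumes S: "finite S" "S \<noteq> {}" and a: "\<And>i. i \<in> S \<Longrightarrow> 0 \<le> a i" and b: "\<And>i. i \<in> S \<Longrightarrow> 0 \<le> b i"
  shows "(\<Prod>i\<in>S. a i) powr (1 / card S) + (\<Prod>i\<in>S. b i) powr (1 / card S)
           \<le> (\<Prod>i\<in>S. a i + b i) powr (1 / card S)"
proof (cases "\<exists>i\<in>S. a i + b i = 0")
  case True
  then obtain i where "i \<in> S" "a i = 0" "b i = 0" using a b by (meson add_nonneg_eq_0_iff)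
  then have "(\<Prod>i\<in>S. a i) = 0" "(\<Prod>i\<in>S. b i) = 0"
    using S(1) by (auto intro: prod_zero)
  then show ?thesis by simp
next
  case False
  define p where "p = 1 / real (card S)"
  define G where "G = (\<Prod>i\<in>S. a i + b i) powr p"
  have pos: "0 < a i + b i" if "i \<in> S" for i using False a b that by fastforce
  then have "0 < (\<Prod>i\<in>S. a i + b i)" by (simp add: prod_pos)
  then have "0 < G" unfolding G_def by simp
  \<comment> \<open>AM-GM for the ratios \<open>a i / (a i + b i)\<close> and \<open>b i / (a i + b i)\<close>, whose means add up to 1\<close>
  have am_gm: "(\<Prod>i\<in>S. f i) powr p / G \<le> (\<Sum>i\<in>S. f i / (a i + b i) / card S)"
    if f: "\<And>i. i \<in> S \<Longrightarrow> 0 \<le> f i" for f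
  proof -
    have "(\<Prod>i\<in>S. f i) powr p / G = ((\<Prod>i\<in>S. f i) / (\<Prod>i\<in>S. a i + b i)) powr p"
      unfolding G_def using f pos by (simp add: powr_divide prod_nonneg less_imp_le)
    also have "\<dots> = (\<Prod>i\<in>S. f i / (a i + b i)) powr p"
      by (simp add: prod_dividef)
    also have "\<dots> \<le> (\<Sum>i\<in>S. f i / (a i + b i) / card S)"
      unfolding p_def using f pos by (intro arith_geom_mean[OF S]) (simp add: less_imp_le)
    finally show ?thesis .
  qed
  have "a i / (a i + b i) / card S + b i / (a i + b i) / card S = 1 / card S" if "i \<in> S" for i
    using pos[OF that] by (simp flip: add_divide_distrib)
  then have "(\<Sum>i\<in>S. a i / (a i + b i) / card S) + (\<Sum>i\<in>S. b i / (a i + b i) / card S)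
      = (\<Sum>i\<in>S. 1 / card S)"
    unfolding sum.distrib[symmetric] by (rule sum.cong[OF refl])
  also have "\<dots> = 1" using S by simp
  finally have "((\<Prod>i\<in>S. a i) powr p + (\<Prod>i\<in>S. b i) powr p) / G \<le> 1"
    using am_gm[of a, OF a] am_gm[of b, OF b] by (simp add: add_divide_distrib)
  then show ?thesis using \<open>0 < G\<close> unfolding G_def p_def by simp
qed

lemma det_mat_1_add_psd_mat:
  fixes C :: "real^'n^'n"
  assumes psd: "psd_mat C"
  shows "1 + det C powr (1 / CARD('n)) \<le> det (mat 1 + C) powr (1 / CARD('n))"
proof -
  obtain V c where V: "orthogonal_matrix V" and C: "C = V ** diag_mat c ** transpose V"
    using symmetric_spectral_decomposition psd_mat_imp_sym_mat[OF psd] by blast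
  have "mat 1 + C = V ** diag_mat (\<lambda>j. 1) ** transpose V + C"
    using V by (simp add: orthogonal_matrix_def)
  also have "\<dots> = V ** diag_mat (\<lambda>j. 1 + c j) ** transpose V"
    unfolding C diag_mat_add by (simp add: matrix_add_ldistrib matrix_add_rdistrib)
  finally have "det (mat 1 + C) = (\<Prod>j\<in>UNIV. 1 + c j)"
    by (simp add: det_spectral_decomposition[OF V])
  moreover have "det C = (\<Prod>j\<in>UNIV. c j)"
    unfolding C by (rule det_spectral_decomposition[OF V])
  moreover have "0 \<le> c j" for j by (rule psd_mat_spectral_eigenvalue_nonneg[OF psd V C])
  ultimately show ?thesis
    using geometric_mean_superadditive[of UNIV "\<lambda>j. 1" c] by simp
qed

theorem Minkowski_det_ineq:
  fixes A B :: "real^'n^'n"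
  assumes pd: "pd_mat A" and psd: "psd_mat B"
  shows "det A powr (1 / CARD('n)) + det B powr (1 / CARD('n)) \<le> det (A + B) powr (1 / CARD('n))"
proof -
  define p where "p = 1 / real CARD('n)"
  \<comment> \<open>congruence by \<open>R\<^sup>-\<^sup>1\<close>, where \<open>A = R R\<^sup>T\<close>, reduces the claim to \<open>A = I\<close>\<close>
  obtain R R' :: "real^'n^'n" where ARR: "A = R ** transpose R" and R'R: "R' ** R = mat 1"
    using pd_mat_factorization[OF pd] by blast
  have RR': "R ** R' = mat 1" by (rule matrix_left_right_inverse1[OF R'R])
  define C where "C = R' ** B ** transpose R'"
  have "psd_mat C" unfolding C_def using psd_mat_congruence[OF psd, of "transpose R'"] by simp
  have "transpose R' ** transpose R = mat 1"
    using RR' by (simp flip: matrix_transpose_mul)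
  moreover have "R ** C ** transpose R = (R ** R') ** B ** (transpose R' ** transpose R)"
    unfolding C_def by (simp only: matrix_mul_assoc)
  ultimately have BRC: "B = R ** C ** transpose R"
    using RR' by (simp only: matrix_mul_lid matrix_mul_rid)
  have ABRC: "A + B = R ** (mat 1 + C) ** transpose R"
    unfolding ARR BRC by (simp only: matrix_add_ldistrib matrix_add_rdistrib matrix_mul_rid)
  define r where "r = det R * det R"
  have dA: "det A = r"
    unfolding r_def ARR by (simp add: det_mul det_transpose)
  have dB: "det B = r * det C"
    unfolding r_def BRC by (simp add: det_mul det_transpose)
  have dAB: "det (A + B) = r * det (mat 1 + C)"
    unfolding r_def ABRC by (simp add: det_mul det_transpose)
  have "0 < r" using pd_mat_det_pos[OF pd] dA by simp
  have "det A powr p + det B powr p = r powr p * (1 + det C powr p)"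
    unfolding dA dB using \<open>0 < r\<close> by (simp add: powr_mult distrib_left)
  also have "\<dots> \<le> r powr p * det (mat 1 + C) powr p"
    using det_mat_1_add_psd_mat[OF \<open>psd_mat C\<close>] unfolding p_def by (intro mult_left_mono) auto
  also have "\<dots> = det (A + B) powr p"
    unfolding dAB using \<open>0 < r\<close> by (simp add: powr_mult)
  finally show ?thesis unfolding p_def .
qed

lemma det_root_scaleR:
  assumes "0 \<le> c"
  shows "det (c *\<^sub>R (A::real^'n^'n)) powr (1 / CARD('n)) = c * det A powr (1 / CARD('n))"
proof (cases "c = 0")
  case False
  then have "(c ^ CARD('n)) powr (1 / CARD('n)) = c"
    using assms by (simp add: powr_realpow[symmetric] powr_powr)
  then show ?thesis by (simp add: det_scaleR powr_mult)
qed (use det_scaleR[of 0 A] in simp)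

lemma concave_on_det_root: "concave_on {A :: real^'n^'n. pd_mat A} (\<lambda>A. det A powr (1 / CARD('n)))"
  unfolding concave_on_iff
proof (intro conjI convex_pd_mat ballI allI impI)
  fix A B :: "real^'n^'n" and u v :: real
  assume A: "A \<in> {A. pd_mat A}" and B: "B \<in> {A. pd_mat A}" and "0 \<le> u" "0 \<le> v" "u + v = 1"
  show "u * det A powr (1 / CARD('n)) + v * det B powr (1 / CARD('n))
    \<le> det (u *\<^sub>R A + v *\<^sub>R B) powr (1 / CARD('n))"
  proof (cases "u = 0")
    case False
    then have "pd_mat (u *\<^sub>R A)" "psd_mat (v *\<^sub>R B)"
      using A B \<open>0 \<le> u\<close> \<open>0 \<le> v\<close> by (auto intro: pd_mat_scaleR psd_mat_scaleR pd_mat_imp_psd_mat)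
    from Minkowski_det_ineq[OF this] show ?thesis
      using \<open>0 \<le> u\<close> \<open>0 \<le> v\<close> by (simp add: det_root_scaleR)
  qed (use \<open>u + v = 1\<close> in simp)
qed

lemma convex_on_Max:
  assumes I: "finite I" "I \<noteq> {}" and f: "\<And>i. i \<in> I \<Longrightarrow> convex_on S (f i)"
  shows "convex_on S (\<lambda>x. Max ((\<lambda>i. f i x) ` I))"
  unfolding convex_on_def
proof (intro conjI ballI allI impI)
  show "convex S" using I f convex_on_imp_convex by blast
  fix x y and u v :: real
  assume xy: "x \<in> S" "y \<in> S" and uv: "0 \<le> u" "0 \<le> v" "u + v = 1"
  have "f i (u *\<^sub>R x + v *\<^sub>R y) \<le> u * Max ((\<lambda>i. f i x) ` I) + v * Max ((\<lambda>i. f i y) ` I)"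
    if "i \<in> I" for i
  proof -
    have "f i (u *\<^sub>R x + v *\<^sub>R y) \<le> u * f i x + v * f i y"
      using f[OF that] xy uv unfolding convex_on_def by blast
    also have "\<dots> \<le> u * Max ((\<lambda>i. f i x) ` I) + v * Max ((\<lambda>i. f i y) ` I)"
      using I that uv by (intro add_mono mult_left_mono Max_ge) auto
    finally show ?thesis .
  qed
  then show "Max ((\<lambda>i. f i (u *\<^sub>R x + v *\<^sub>R y)) ` I)
      \<le> u * Max ((\<lambda>i. f i x) ` I) + v * Max ((\<lambda>i. f i y) ` I)"
    using I by (simp add: Max_le_iff)
qed

lemma convex_on_sublevel:
  assumes "convex_on S f"
  shows "convex {x\<in>S. f x \<le> a}"
proof (rule convexI, clarify)
  fix x y and u v :: real
  assume "x \<in> S" "f x \<le> a" "y \<in> S" "f y \<le> a" "0 \<le> u" "0 \<le> v" "u + v = 1"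
  moreover have "f (u *\<^sub>R x + v *\<^sub>R y) \<le> u * f x + v * f y"
    using assms calculation unfolding convex_on_def by blast
  moreover have "u * f x + v * f y \<le> u * a + v * a"
    using calculation by (intro add_mono mult_left_mono)
  moreover have "u *\<^sub>R x + v *\<^sub>R y \<in> S"
    using convex_on_imp_convex[OF assms] calculation unfolding convex_def by blast
  ultimately show "u *\<^sub>R x + v *\<^sub>R y \<in> S \<and> f (u *\<^sub>R x + v *\<^sub>R y) \<le> a"
    by (simp flip: distrib_right)
qed

lemma concave_on_superlevel: "concave_on S g \<Longrightarrow> convex {x\<in>S. a \<le> g x}"
  using convex_on_sublevel[of S "\<lambda>x. - g x" "- a"] unfolding concave_on_def by simp

lemma convex_on_le_concave_on:
  assumes f: "convex_on S f" and g: "concave_on S g" and "0 \<le> b"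
    and nonneg: "\<And>x. x \<in> S \<Longrightarrow> 0 \<le> f x \<and> 0 \<le> g x"
  shows "convex {x\<in>S. a * f x \<le> b * g x}"
proof (cases "0 \<le> a")
  case True
  have "concave_on S (\<lambda>x. b * g x)"
    using convex_on_cmul[OF \<open>0 \<le> b\<close>, of S "\<lambda>x. - g x"] g by (simp add: concave_on_def)
  then have "convex_on S (\<lambda>x. a * f x - b * g x)"
    by (rule convex_on_diff[OF convex_on_cmul[OF True f]])
  from convex_on_sublevel[OF this, of 0] show ?thesis by simp
next
  case False
  have "a * f x \<le> b * g x" if "x \<in> S" for x
  proof -
    have "a * f x \<le> 0" using False nonneg[OF that] by (simp add: mult_nonpos_nonneg)
    also have "0 \<le> b * g x" using \<open>0 \<le> b\<close> nonneg[OF that] by simp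
    finally show ?thesis .
  qed
  then have "{x\<in>S. a * f x \<le> b * g x} = S" by blast
  then show ?thesis using f convex_on_imp_convex by simp
qed

section \<open>Matrix convexity of the quadratic map\<close>

lemma quadratic_convex_combination:
  fixes A B L :: "real^'n^'n"
  assumes "u + v = 1"
  shows "(u *\<^sub>R A + v *\<^sub>R B) ** L ** (u *\<^sub>R A + v *\<^sub>R B)
     = u *\<^sub>R (A ** L ** A) + v *\<^sub>R (B ** L ** B) - (u * v) *\<^sub>R ((A - B) ** L ** (A - B))"
proof -
  have v: "v = 1 - u" using assms by simp
  show ?thesis unfolding v
    by (simp add: matrix_add_ldistrib matrix_add_rdistrib matrix_diff_ldistrib matrix_diff_rdistrib
        matrix_scalar_ac scalar_matrix_assoc[symmetric] algebra_simps)
qed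

lemma loewner_le_quadratic_convex_combination:
  fixes A B L :: "real^'n^'n"
  assumes L: "psd_mat L" and "sym_mat A" "sym_mat B" and "0 \<le> u" "0 \<le> v" "u + v = 1"
  shows "loewner_le ((u *\<^sub>R A + v *\<^sub>R B) ** L ** (u *\<^sub>R A + v *\<^sub>R B))
           (u *\<^sub>R (A ** L ** A) + v *\<^sub>R (B ** L ** B))"
proof -
  have "psd_mat ((A - B) ** L ** (A - B))"
    using assms by (intro psd_mat_congruence_sym sym_mat_diff)
  then show ?thesis
    unfolding loewner_le_def quadratic_convex_combination[OF \<open>u + v = 1\<close>]
    using assms by (simp add: psd_mat_scaleR)
qed

lemma convex_quadratic_loewner_le_self:
  fixes L :: "real^'n^'n"
  assumes L: "psd_mat L"
  shows "convex {D. sym_mat D \<and> loewner_le (D ** L ** D) D}"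
proof (rule convexI, clarify)
  fix A B :: "real^'n^'n" and u v :: real
  assume A: "sym_mat A" "loewner_le (A ** L ** A) A" and B: "sym_mat B" "loewner_le (B ** L ** B) B"
    and "0 \<le> u" "0 \<le> v" "u + v = 1"
  then show "sym_mat (u *\<^sub>R A + v *\<^sub>R B) \<and>
      loewner_le ((u *\<^sub>R A + v *\<^sub>R B) ** L ** (u *\<^sub>R A + v *\<^sub>R B)) (u *\<^sub>R A + v *\<^sub>R B)"
    by (meson loewner_le_trans loewner_le_quadratic_convex_combination[OF L]
        loewner_le_convex_combination sym_mat_add sym_mat_scaleR)
qed

definition positive_map :: "(real^'n^'n \<Rightarrow> real^'m^'m) \<Rightarrow> bool" where
  "positive_map \<Phi> \<longleftrightarrow> linear \<Phi> \<and> (\<forall>X. psd_mat X \<longrightarrow> psd_mat (\<Phi> X))"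

lemma positive_map_mono:
  assumes "positive_map \<Phi>" "loewner_le X Y"
  shows "loewner_le (\<Phi> X) (\<Phi> Y)"
  using assms unfolding positive_map_def loewner_le_def by (metis linear_diff)

lemma convex_on_lambda_max_positive_map_quadratic:
  fixes L :: "real^'n^'n" and \<Phi> :: "real^'n^'n \<Rightarrow> real^'m^'m"
  assumes \<Phi>: "positive_map \<Phi>" and L: "psd_mat L"
  shows "convex_on {D. sym_mat D} (\<lambda>D. lambda_max (\<Phi> (D ** L ** D)))"
  unfolding convex_on_def
proof (intro conjI convex_sym_mat ballI allI impI)
  have psd_\<Phi>: "psd_mat (\<Phi> (D ** L ** D))" if "sym_mat D" for D
    using \<Phi> psd_mat_congruence_sym[OF L that] unfolding positive_map_def by blast
  fix A B :: "real^'n^'n" and u v :: real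
  assume A: "A \<in> {D. sym_mat D}" and B: "B \<in> {D. sym_mat D}" and uv: "0 \<le> u" "0 \<le> v" "u + v = 1"
  let ?C = "u *\<^sub>R A + v *\<^sub>R B"
  have "loewner_le (\<Phi> (?C ** L ** ?C)) (\<Phi> (u *\<^sub>R (A ** L ** A) + v *\<^sub>R (B ** L ** B)))"
    using A B uv
    by (intro positive_map_mono[OF \<Phi>] loewner_le_quadratic_convex_combination[OF L]) auto
  also have "\<Phi> (u *\<^sub>R (A ** L ** A) + v *\<^sub>R (B ** L ** B))
      = u *\<^sub>R \<Phi> (A ** L ** A) + v *\<^sub>R \<Phi> (B ** L ** B)"
    using \<Phi> unfolding positive_map_def by (simp add: linear_add linear_scale)
  finally have "lambda_max (\<Phi> (?C ** L ** ?C))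
      \<le> lambda_max (u *\<^sub>R \<Phi> (A ** L ** A) + v *\<^sub>R \<Phi> (B ** L ** B))"
    using A B
    by (intro lambda_max_mono psd_mat_imp_sym_mat[OF psd_\<Phi>] sym_mat_add sym_mat_scaleR) auto
  also have "\<dots> \<le> u * lambda_max (\<Phi> (A ** L ** A)) + v * lambda_max (\<Phi> (B ** L ** B))"
    using A B uv psd_\<Phi> psd_mat_imp_sym_mat
    by (intro convex_on_lambda_max[unfolded convex_on_def, THEN conjunct2, rule_format]) auto
  finally show "lambda_max (\<Phi> (?C ** L ** ?C))
      \<le> u * lambda_max (\<Phi> (A ** L ** A)) + v * lambda_max (\<Phi> (B ** L ** B))" .
qed

section \<open>Expectations of random matrices\<close>

lemma integrable_mult_if_square_integrable:
  fixes f g :: "'w \<Rightarrow> real"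
  assumes [measurable]: "f \<in> borel_measurable M" "g \<in> borel_measurable M"
    and "integrable M (\<lambda>w. (f w)\<^sup>2)" "integrable M (\<lambda>w. (g w)\<^sup>2)"
  shows "integrable M (\<lambda>w. f w * g w)"
proof (rule Bochner_Integration.integrable_bound[where f = "\<lambda>w. (f w)\<^sup>2 + (g w)\<^sup>2"])
  show "integrable M (\<lambda>w. (f w)\<^sup>2 + (g w)\<^sup>2)" using assms by simp
  have "\<bar>f w * g w\<bar> \<le> (f w)\<^sup>2 + (g w)\<^sup>2" for w
  proof -
    have "2 * (\<bar>f w\<bar> * \<bar>g w\<bar>) \<le> (f w)\<^sup>2 + (g w)\<^sup>2"
      using sum_squares_bound[of "\<bar>f w\<bar>" "\<bar>g w\<bar>"] by (simp add: mult.assoc)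
    then show ?thesis unfolding abs_mult by (smt (verit) mult_nonneg_nonneg abs_ge_zero)
  qed
  then show "AE w in M. norm (f w * g w) \<le> norm ((f w)\<^sup>2 + (g w)\<^sup>2)" by simp
qed simp

lemma (in finite_measure) square_integrable_diff_const:
  fixes f :: "'a \<Rightarrow> real"
  assumes [measurable]: "f \<in> borel_measurable M" and "integrable M (\<lambda>w. (f w)\<^sup>2)"
  shows "integrable M (\<lambda>w. (f w - c)\<^sup>2)"
proof -
  have "integrable M f" using assms by (rule square_integrable_imp_integrable)
  then have "integrable M (\<lambda>w. (f w)\<^sup>2 - 2 * c * f w + c\<^sup>2)" using assms by simp
  then show ?thesis by (simp add: power2_diff algebra_simps)
qed

lemma integrable_mat_mult_const:
  fixes Y :: "'w \<Rightarrow> real^'n^'m" and A :: "real^'m^'k" and B :: "real^'p^'n"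
  assumes "\<And>j k. integrable M (\<lambda>w. Y w $ j $ k)"
  shows "integrable M (\<lambda>w. (A ** Y w ** B) $ i $ l)"
  using assms by (simp add: matrix_matrix_mult_def sum_distrib_right)

lemma mat_expect_add:
  fixes Y Z :: "'w \<Rightarrow> real^'n^'m"
  assumes "\<And>j k. integrable M (\<lambda>w. Y w $ j $ k)" "\<And>j k. integrable M (\<lambda>w. Z w $ j $ k)"
  shows "mat_expect M (\<lambda>w. Y w + Z w) = mat_expect M Y + mat_expect M Z"
  unfolding mat_expect_def using assms by (simp add: vec_eq_iff)

lemma mat_expect_scaleR: "mat_expect M (\<lambda>w. c *\<^sub>R Y w) = c *\<^sub>R mat_expect M Y"
  unfolding mat_expect_def by (simp add: vec_eq_iff)

lemma mat_expect_quadratic_form: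
  fixes Y :: "'w \<Rightarrow> real^'n^'n"
  assumes "\<And>j k. integrable M (\<lambda>w. Y w $ j $ k)"
  shows "x \<bullet> (mat_expect M Y *v x) = (\<integral>w. x \<bullet> (Y w *v x) \<partial>M)"
  unfolding mat_expect_def using assms
  by (simp add: inner_vec_def matrix_vector_mult_def sum_distrib_left integral_sum mult_ac)

lemma psd_mat_expect:
  fixes Y :: "'w \<Rightarrow> real^'n^'n"
  assumes int: "\<And>j k. integrable M (\<lambda>w. Y w $ j $ k)" and psd: "\<And>w. w \<in> space M \<Longrightarrow> psd_mat (Y w)"
  shows "psd_mat (mat_expect M Y)"
  unfolding psd_mat_def
proof
  have "(\<integral>w. Y w $ k $ j \<partial>M) = (\<integral>w. Y w $ j $ k \<partial>M)" for j k
    using psd unfolding psd_mat_def sym_mat_def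
    by (intro Bochner_Integration.integral_cong) (auto simp: transpose_def vec_eq_iff)
  then show "sym_mat (mat_expect M Y)"
    by (simp add: sym_mat_def mat_expect_def transpose_def vec_eq_iff)
  show "\<forall>x. 0 \<le> x \<bullet> (mat_expect M Y *v x)"
    using psd unfolding mat_expect_quadratic_form[OF int] psd_mat_def
    by (auto intro: integral_nonneg_AE)
qed

lemma integrable_deviation_sandwich:
  fixes T :: "'w \<Rightarrow> real^'n^'n" and A :: "real^'n^'m" and B :: "real^'p^'n"
  assumes "finite_measure M" and meas: "\<And>j k. (\<lambda>w. T w $ j $ k) \<in> borel_measurable M"
    and sq: "\<And>j k. integrable M (\<lambda>w. (T w $ j $ k)\<^sup>2)"
  shows "integrable M (\<lambda>w. (A ** (T w - mat 1) ** X ** (T w - mat 1) ** B) $ i $ l)"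
proof -
  define Y where "Y w = T w - mat 1" for w
  have meas_Y: "(\<lambda>w. Y w $ j $ k) \<in> borel_measurable M" for j k
    unfolding Y_def using meas by simp
  have sq_Y: "integrable M (\<lambda>w. (Y w $ j $ k)\<^sup>2)" for j k
    unfolding Y_def using finite_measure.square_integrable_diff_const[OF assms(1) meas sq] by simp
  have "(Y w ** X ** Y w) $ j $ k = (\<Sum>b\<in>UNIV. \<Sum>a\<in>UNIV. X $ a $ b * (Y w $ j $ a * Y w $ b $ k))"
    for w j k by (simp add: matrix_matrix_mult_def sum_distrib_left sum_distrib_right mult_ac)
  then have "integrable M (\<lambda>w. (Y w ** X ** Y w) $ j $ k)" for j k
    by (simp add: integrable_mult_if_square_integrable meas_Y sq_Y)
  then have "integrable M (\<lambda>w. (A ** (Y w ** X ** Y w) ** B) $ i $ l)"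
    by (rule integrable_mat_mult_const)
  then show ?thesis unfolding Y_def by (simp add: matrix_mul_assoc)
qed

definition sandwich_expectation ::
    "'w measure \<Rightarrow> ('w \<Rightarrow> real^'n^'n) \<Rightarrow> real^'n^'n \<Rightarrow> real^'n^'n \<Rightarrow> real^'n^'n" where
  "sandwich_expectation M T P X = mat_expect M (\<lambda>w. P ** (T w - mat 1) ** X ** (T w - mat 1) ** P)"

lemma positive_map_sandwich_expectation:
  fixes T :: "'w \<Rightarrow> real^'n^'n" and P :: "real^'n^'n"
  assumes fm: "finite_measure M" and meas: "\<And>j k. (\<lambda>w. T w $ j $ k) \<in> borel_measurable M"
    and sq: "\<And>j k. integrable M (\<lambda>w. (T w $ j $ k)\<^sup>2)"
    and sym_T: "\<And>w. w \<in> space M \<Longrightarrow> sym_mat (T w)" and sym_P: "sym_mat P"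
  shows "positive_map (sandwich_expectation M T P)"
  unfolding positive_map_def
proof (intro conjI allI impI linearI)
  fix X X' :: "real^'n^'n" and c :: real
  show "sandwich_expectation M T P (X + X')
      = sandwich_expectation M T P X + sandwich_expectation M T P X'"
    unfolding sandwich_expectation_def
    by (simp add: matrix_add_ldistrib matrix_add_rdistrib mat_expect_add
        integrable_deviation_sandwich[OF fm meas sq])
  show "sandwich_expectation M T P (c *\<^sub>R X) = c *\<^sub>R sandwich_expectation M T P X"
    unfolding sandwich_expectation_def
    by (simp add: matrix_scalar_ac scalar_matrix_assoc flip: mat_expect_scaleR)
next
  fix X :: "real^'n^'n"
  assume X: "psd_mat X"
  have "psd_mat (P ** (T w - mat 1) ** X ** (T w - mat 1) ** P)" if "w \<in> space M" for w
  proof -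
    have "sym_mat (T w - mat 1)"
      using sym_mat_diff[OF sym_T[OF that], of "mat 1"] by (simp add: sym_mat_def)
    then have "transpose ((T w - mat 1) ** P) = P ** (T w - mat 1)"
      using sym_P by (simp add: sym_mat_def matrix_transpose_mul)
    then show ?thesis
      using psd_mat_congruence[OF X, of "(T w - mat 1) ** P"] by (simp add: matrix_mul_assoc)
  qed
  then show "psd_mat (sandwich_expectation M T P X)"
    unfolding sandwich_expectation_def
    by (intro psd_mat_expect integrable_deviation_sandwich[OF fm meas sq])
qed

lemma lambda_D_eq_Max:
  "lambda_D M L Ls S n D
     = Max ((\<lambda>i. lambda_max (sandwich_expectation M (S i) (mat_sqrt (Ls i)) (D ** L ** D)))
            ` {1..n})"
  unfolding lambda_D_def sandwich_expectation_def by (simp only: matrix_mul_assoc)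

lemma convex_on_lambda_D:
  assumes "1 \<le> n" "psd_mat L"
    and "\<forall>i\<in>{1..n}. positive_map (sandwich_expectation M (S i) (mat_sqrt (Ls i)))"
  shows "convex_on {D. sym_mat D} (lambda_D M L Ls S n)"
  unfolding lambda_D_eq_Max
  using assms by (intro convex_on_Max convex_on_lambda_max_positive_map_quadratic) auto

lemma lambda_D_nonneg:
  assumes "1 \<le> n" "psd_mat L"
    and "\<forall>i\<in>{1..n}. positive_map (sandwich_expectation M (S i) (mat_sqrt (Ls i)))"
    and "sym_mat D"
  shows "0 \<le> lambda_D M L Ls S n D"
proof -
  have "psd_mat (sandwich_expectation M (S 1) (mat_sqrt (Ls 1)) (D ** L ** D))"
    using assms psd_mat_congruence_sym[of L D] unfolding positive_map_def by auto
  then show ?thesis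
    unfolding lambda_D_eq_Max using assms(1)
    by (intro Max_ge_iff[THEN iffD2]) (auto intro!: bexI[of _ 1] lambda_max_nonneg)
qed

theorem proposition3:
  fixes M :: "'w measure" and S :: "nat \<Rightarrow> 'w \<Rightarrow> real^'d^'d"
    and L :: "real^'d^'d" and Ls :: "nat \<Rightarrow> real^'d^'d"
    and n K :: nat and eps Dinf c :: real
  assumes "prob_space M"
    and "n \<ge> 1" and "K \<ge> 1" and "eps > 0" and "c \<ge> 0"
    and "pd_mat L"
    and "\<forall>i\<in>{1..n}. pd_mat (Ls i)"
    and "\<forall>i\<in>{1..n}. \<forall>w\<in>space M. psd_mat (S i w)"
    and "\<forall>i\<in>{1..n}. \<forall>j k. (\<lambda>w. S i w $ j $ k) \<in> borel_measurable M"
    and "\<forall>i\<in>{1..n}. \<forall>j k. integrable M (\<lambda>w. (S i w $ j $ k)^2)"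
    and "\<forall>i\<in>{1..n}. mat_expect M (S i) = mat 1"
  shows "convex {D. pd_mat D \<and> loewner_le (D ** L ** D) D
            \<and> lambda_D M L Ls S n D \<le> real n / real K
            \<and> 4 * Dinf * lambda_D M L Ls S n D \<le> real n * eps^2 * det D powr (1 / real CARD('d))
            \<and> real K \<ge> 12 * c / (det D powr (1 / real CARD('d)) * eps^2)}"
proof -
  let ?g = "\<lambda>D::real^'d^'d. det D powr (1 / real CARD('d))"
  let ?lam = "lambda_D M L Ls S n"
  have "finite_measure M" using \<open>prob_space M\<close> by (rule prob_space.axioms(1))
  then have "\<forall>i\<in>{1..n}. positive_map (sandwich_expectation M (S i) (mat_sqrt (Ls i)))"
    using assms(7-10) mat_sqrt_pd
    by (blast intro: positive_map_sandwich_expectation psd_mat_imp_sym_mat)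
  note lam = convex_on_lambda_D[OF \<open>n \<ge> 1\<close> pd_mat_imp_psd_mat[OF \<open>pd_mat L\<close>] this]
    lambda_D_nonneg[OF \<open>n \<ge> 1\<close> pd_mat_imp_psd_mat[OF \<open>pd_mat L\<close>] this]
  let ?I = "{D. pd_mat D} \<inter> {D. sym_mat D \<and> loewner_le (D ** L ** D) D}
    \<inter> {D\<in>{D. sym_mat D}. ?lam D \<le> real n / real K}
    \<inter> {D\<in>{D. pd_mat D}. (4 * Dinf) * ?lam D \<le> (real n * eps\<^sup>2) * ?g D}
    \<inter> {D\<in>{D. pd_mat D}. 12 * c / (real K * eps\<^sup>2) \<le> ?g D}"
  have "convex ?I"
    using lam convex_on_subset[OF lam(1) _ convex_pd_mat] pd_mat_imp_sym_mat
    by (intro convex_Int convex_pd_mat convex_quadratic_loewner_le_self pd_mat_imp_psd_mat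
        convex_on_sublevel convex_on_le_concave_on concave_on_superlevel concave_on_det_root assms)
      (auto simp: pd_mat_imp_sym_mat)
  moreover have "12 * c / (?g D * eps\<^sup>2) \<le> real K \<longleftrightarrow> 12 * c / (real K * eps\<^sup>2) \<le> ?g D"
    if "pd_mat D" for D
    using pd_mat_det_pos[OF that] \<open>eps > 0\<close> \<open>K \<ge> 1\<close> by (simp add: field_simps)
  then have "{D. pd_mat D \<and> loewner_le (D ** L ** D) D
            \<and> ?lam D \<le> real n / real K
            \<and> 4 * Dinf * ?lam D \<le> real n * eps^2 * ?g D
            \<and> real K \<ge> 12 * c / (?g D * eps^2)} = ?I"
    by (auto simp: pd_mat_imp_sym_mat)
  ultimately show ?thesis by simp
qed

end
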